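(* Let $X_1,X_2,\dots$ be i.i.d. $\mathbb{Z}$-valued random variables on $(\Omega,\mathcal{F},P)$, $S_n=\sum_{j=1}^nX_j$, satisfying (A1), and suppose there exist $c_*>0$ and $\varepsilon>0$ with $\phi(\theta)=1-c_*|\theta|+O(|\theta|^{1+\varepsilon})$ as $\theta\to0$. Then there exist $C_2>0$ and $N_2\in\mathbb{N}$ such that for all $n\ge N_2$, $$\sup_{l\in\mathbb{Z}}\left|nP\{S_n=l\}-\frac{1}{\pi}\frac{c_*}{c_*^2+(l/n)^2}\right|\le C_2n^{-\delta},$$ where $\delta=\min\{\varepsilon/2,1/2\}$.
   Context: $\phi(\theta)=\sum_{k\in\mathbb{Z}}e^{i\theta k}P\{X_1=k\}$. (A1) For each $y\in\mathbb{Z}$, the smallest subgroup of $\mathbb{Z}$ containing $\{y+k:P\{X_1=k\}>0\}$ is $\mathbb{Z}$. *)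

theory Defs
  imports "HOL-Probability.Probability" "HOL-Library.Landau_Symbols"
begin

definition int_subgroup_generated :: "int set \<Rightarrow> int set" where
  "int_subgroup_generated A =
     \<Inter>{H. 0 \<in> H \<and> (\<forall>x\<in>H. \<forall>y\<in>H. x - y \<in> H) \<and> A \<subseteq> H}"

definition int_charfun :: "'a measure \<Rightarrow> ('a \<Rightarrow> int) \<Rightarrow> real \<Rightarrow> complex" where
  "int_charfun M Y \<theta> =
     (\<Sum>\<^sub>\<infinity>k\<in>(UNIV::int set). cis (\<theta> * of_int k) * complex_of_real (measure M {\<omega>\<in>space M. Y \<omega> = k}))"

definition aperiodic_A1 :: "'a measure \<Rightarrow> ('a \<Rightarrow> int) \<Rightarrow> bool" where
  "aperiodic_A1 M Y \<longleftrightarrow>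
     (\<forall>y::int. int_subgroup_generated {y + k | k. measure M {\<omega>\<in>space M. Y \<omega> = k} > 0} = UNIV)"

end

theory Submission
  imports Defs
begin

text \<open>
  By Fourier inversion on the integers, \<open>2 pi P{S n = l}\<close> is the integral over \<open>[-pi, pi]\<close>
  of \<open>exp(-i \<theta> l) \<phi>(\<theta>) ^ n\<close>. Near \<open>0\<close> the expansion \<open>\<phi>(\<theta>) = 1 - c |\<theta>| + O(|\<theta>| powr (1 + \<epsilon>))\<close>
  gives \<open>|\<phi>(\<theta>) ^ n - exp(-c n |\<theta>|)| \<le> C n powr (-\<epsilon>) exp(-c n |\<theta>| / 8)\<close>, whose integral is
  \<open>O(n powr (-1 - \<epsilon>))\<close>; away from \<open>0\<close>, aperiodicity (A1) forces \<open>|\<phi>| \<le> \<rho> < 1\<close>, so both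
  \<open>\<phi> ^ n\<close> and \<open>exp(-c n |\<theta>|)\<close> are \<open>O(\<rho> ^ n)\<close> there. The integral of \<open>exp(-c n |\<theta>|) cos(\<theta> l)\<close>
  over \<open>[-pi, pi]\<close> is explicit and equals \<open>(2 / n) c / (c\<^sup>2 + (l / n)\<^sup>2)\<close> up to an
  exponentially small term. Altogether the error is \<open>O(n powr (- min \<epsilon> 1))\<close>, better than claimed.
\<close>

lemma has_integral_exp_abs_cos_0_pi:
  fixes a l :: real
  assumes a: "a > 0" and sin_l: "sin (l * pi) = 0"
  shows "((\<lambda>\<theta>. exp (-a * \<bar>\<theta>\<bar>) * cos (\<theta> * l)) has_integral
          (a - exp (-a * pi) * a * cos (l * pi)) / (a\<^sup>2 + l\<^sup>2)) {0..pi}"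
proof -
  define D where "D = a\<^sup>2 + l\<^sup>2"
  have D: "D > 0" using a by (simp add: D_def add_pos_nonneg)
  define G where "G \<theta> = exp (-a * \<theta>) * (l * sin (l * \<theta>) - a * cos (l * \<theta>))" for \<theta>
  define F where "F \<theta> = G \<theta> / D" for \<theta>
  have "(G has_real_derivative D * (exp (-a * x) * cos (x * l))) (at x)" for x
    unfolding G_def D_def
    by (rule derivative_eq_intros refl | simp)+ (simp add: algebra_simps power2_eq_square)
  then have "(F has_real_derivative exp (-a * x) * cos (x * l)) (at x)" for x
    unfolding F_def using DERIV_cdivide[where c = D, of G] D by fastforce
  then have "((\<lambda>\<theta>. exp (-a * \<theta>) * cos (\<theta> * l)) has_integral (F pi - F 0)) {0..pi}"
    by (intro fundamental_theorem_of_calculus)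
      (auto simp: has_real_derivative_iff_has_vector_derivative[symmetric] intro: has_field_derivative_at_within)
  moreover have "F pi - F 0 = (a - exp (-a * pi) * a * cos (l * pi)) / D"
    unfolding F_def G_def using sin_l by (simp add: mult.commute diff_divide_distrib)
  ultimately have "((\<lambda>\<theta>. exp (-a * \<theta>) * cos (\<theta> * l)) has_integral
      (a - exp (-a * pi) * a * cos (l * pi)) / D) {0..pi}"
    by simp
  then show ?thesis
    unfolding D_def by (rule has_integral_eq[rotated]) auto
qed

lemma has_integral_exp_abs_cos:
  fixes a :: real and l :: int
  assumes "a > 0"
  shows "((\<lambda>\<theta>. exp (-a * \<bar>\<theta>\<bar>) * cos (\<theta> * of_int l)) has_integral
          2 * a * (1 - exp (-a * pi) * cos (of_int l * pi)) / (a\<^sup>2 + (of_int l)\<^sup>2)) {-pi..pi}"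
proof -
  let ?f = "\<lambda>\<theta>. exp (-a * \<bar>\<theta>\<bar>) * cos (\<theta> * l)"
  let ?I = "(a - exp (-a * pi) * a * cos (l * pi)) / (a\<^sup>2 + (of_int l)\<^sup>2)"
  have right: "(?f has_integral ?I) {0..pi}"
    using has_integral_exp_abs_cos_0_pi[OF assms, of l] sin_npi_int[of l] by (simp add: mult.commute)
  then have "((\<lambda>\<theta>. ?f (-\<theta>)) has_integral ?I) {-pi..0}"
    using has_integral_reflect_real[of ?f ?I pi 0] by simp
  then have left: "(?f has_integral ?I) {-pi..0}"
    by simp
  have "(?f has_integral ?I + ?I) {-pi..pi}"
    by (rule has_integral_combine[OF _ _ left right]) auto
  then show ?thesis
    by (simp add: field_simps)
qed

lemma has_integral_cos_int:
  fixes m :: int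
  shows "((\<lambda>\<theta>. cos (\<theta> * of_int m)) has_integral (if m = 0 then 2 * pi else 0)) {-pi..pi}"
proof (cases "m = 0")
  case True
  then show ?thesis
    using has_integral_const_real[of "1::real" "-pi" pi] by simp
next
  case False
  define F :: "real \<Rightarrow> real" where "F \<theta> = sin (\<theta> * of_int m) / of_int m" for \<theta>
  have "((\<lambda>\<theta>. cos (\<theta> * of_int m)) has_integral (F pi - F (-pi))) {-pi..pi}"
    unfolding F_def using False
    by (intro fundamental_theorem_of_calculus)
      (auto simp: has_real_derivative_iff_has_vector_derivative[symmetric] field_simps
            intro!: derivative_eq_intros)
  moreover have "F pi - F (-pi) = 0"
    unfolding F_def by (simp add: mult.commute)
  ultimately show ?thesis
    using False by simp
qed

lemma has_integral_imp_lborel_indicator: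
  fixes f :: "real \<Rightarrow> real"
  assumes "continuous_on {a..b} f" "(f has_integral I) {a..b}"
  shows "integrable lborel (\<lambda>x. indicator {a..b} x * f x)"
    and "integral\<^sup>L lborel (\<lambda>x. indicator {a..b} x * f x) = I"
proof -
  have f: "set_integrable lborel {a..b} f"
    unfolding set_integrable_def using borel_integrable_compact[OF _ assms(1)] by simp
  then show "integrable lborel (\<lambda>x. indicator {a..b} x * f x)"
    unfolding set_integrable_def by simp
  show "integral\<^sup>L lborel (\<lambda>x. indicator {a..b} x * f x) = I"
    using set_borel_integral_eq_integral(2)[OF f] assms(2)
    unfolding set_lebesgue_integral_def by (simp add: integral_unique)
qed

lemma norm_power_diff_le:
  fixes z w :: "'a::{real_normed_algebra_1, comm_monoid_mult}"
  assumes "norm z \<le> B" "norm w \<le> B"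
  shows "norm (z ^ Suc n - w ^ Suc n) \<le> real (Suc n) * B ^ n * norm (z - w)"
proof (induction n)
  case 0
  then show ?case by simp
next
  case (Suc n)
  have B: "B \<ge> 0"
    using assms(1) norm_ge_zero order_trans by blast
  have "norm (z ^ Suc (Suc n) - w ^ Suc (Suc n)) = norm (z * (z ^ Suc n - w ^ Suc n) + w ^ Suc n * (z - w))"
    by (simp add: algebra_simps)
  also have "\<dots> \<le> norm z * norm (z ^ Suc n - w ^ Suc n) + norm w ^ Suc n * norm (z - w)"
    by (intro norm_triangle_le add_mono norm_mult_ineq order_trans[OF norm_mult_ineq]
        mult_right_mono norm_power_ineq) simp_all
  also have "\<dots> \<le> B * (real (Suc n) * B ^ n * norm (z - w)) + B ^ Suc n * norm (z - w)"
    using B by (intro add_mono mult_mono Suc power_mono assms) auto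
  also have "\<dots> = real (Suc (Suc n)) * B ^ Suc n * norm (z - w)"
    by (simp add: algebra_simps)
  finally show ?case .
qed

lemma abs_one_minus_minus_exp_neg_le:
  fixes x :: real
  assumes "x \<ge> 0"
  shows "\<bar>1 - x - exp (-x)\<bar> \<le> x\<^sup>2 / 2"
proof -
  have lower: "1 - x \<le> exp (-x)"
    using exp_ge_add_one_self[of "-x"] by simp
  have pos: "1 + x + x\<^sup>2 / 2 > 0"
    using assms by (simp add: add_pos_nonneg)
  have "exp (-x) = 1 / exp x"
    by (simp add: exp_minus inverse_eq_divide)
  also have "\<dots> \<le> 1 / (1 + x + x\<^sup>2 / 2)"
    using exp_lower_Taylor_quadratic[OF assms] pos by (simp add: frac_le)
  also have "\<dots> \<le> 1 - x + x\<^sup>2 / 2"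
  proof -
    have "1 \<le> (1 - x + x\<^sup>2 / 2) * (1 + x + x\<^sup>2 / 2)"
      using assms by (simp add: algebra_simps power2_eq_square power4_eq_xxxx)
    then show ?thesis
      using pos by (simp add: divide_simps)
  qed
  finally show ?thesis
    using lower by simp
qed

lemma powr_mult_exp_neg_le:
  fixes u b s :: real
  assumes u: "u \<ge> 0" and b: "b > 0" and s: "1 \<le> s" "s \<le> 2"
  shows "u powr s * exp (-b * u) \<le> 1 / b + 2 / b\<^sup>2"
proof -
  have "u powr s \<le> u + u\<^sup>2"
  proof (cases "u \<le> 1")
    case True
    then have "u powr s \<le> u powr 1"
      using u s by (intro powr_mono') auto
    then show ?thesis
      using u zero_le_power2[of u] powr_one[OF u] by linarith
  next
    case False
    then have "u powr s \<le> u powr 2"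
      using s by (intro powr_mono) auto
    then show ?thesis
      using u by (simp add: powr_numeral)
  qed
  moreover have "u + u\<^sup>2 \<le> exp (b * u) * (1 / b + 2 / b\<^sup>2)"
  proof -
    have bu: "b * u \<ge> 0"
      using u b by simp
    then have "b * u \<le> exp (b * u)" "(b * u)\<^sup>2 / 2 \<le> exp (b * u)"
      using exp_lower_Taylor_quadratic[OF bu] zero_le_power2[of "b * u"] by linarith+
    then have "u \<le> exp (b * u) / b" "u\<^sup>2 \<le> 2 * exp (b * u) / b\<^sup>2"
      using b by (auto simp: field_simps power_mult_distrib)
    then show ?thesis
      by (simp add: field_simps)
  qed
  ultimately show ?thesis
    by (simp add: exp_minus field_simps)
qed

lemma eventually_mult_power_le_powr:
  fixes \<rho> \<delta> :: real
  assumes \<rho>: "0 \<le> \<rho>" "\<rho> < 1" and \<delta>: "0 \<le> \<delta>" "\<delta> \<le> 1"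
  shows "eventually (\<lambda>n. real n * \<rho> ^ n \<le> real n powr (-\<delta>)) sequentially"
proof -
  define q where "q = sqrt \<rho>"
  have "(\<lambda>n. (of_nat n * q ^ n)\<^sup>2) \<longlonglongrightarrow> (0::real)"
    using tendsto_power[OF powser_times_n_limit_0, of q 2] \<rho> by (simp add: q_def)
  then have "eventually (\<lambda>n. (real n * q ^ n)\<^sup>2 < 1) sequentially"
    by (rule order_tendstoD) simp
  then show ?thesis
    using eventually_ge_at_top[of 1]
  proof eventually_elim
    case (elim n)
    have "(real n * q ^ n)\<^sup>2 = real n ^ 2 * \<rho> ^ n"
      using \<rho> by (simp add: q_def power_mult_distrib flip: real_sqrt_power)
    moreover have "real n powr (1 + \<delta>) \<le> real n ^ 2"
      using elim \<delta> powr_mono[of "1 + \<delta>" 2 "real n"] by (simp add: powr_numeral)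
    ultimately have "real n powr (1 + \<delta>) * \<rho> ^ n \<le> 1"
      using elim \<rho> by (smt (verit) mult_right_mono zero_le_power)
    then show ?case
      using elim by (simp add: powr_add powr_minus field_simps)
  qed
qed

lemma exists_small_radius:
  fixes c K \<delta> r0 :: real
  assumes c: "c > 0" and K: "K \<ge> 0" and \<delta>: "\<delta> > 0" and r0: "r0 > 0"
  shows "\<exists>r. 0 < r \<and> r \<le> 1 \<and> c * r \<le> 1 \<and> r < r0 \<and> K * r powr \<delta> \<le> c / 4"
proof -
  define q where "q = c / (4 * (K + 1))"
  define r where "r = min (r0 / 2) (min 1 (min (1 / c) (q powr (1 / \<delta>))))"
  have q: "q > 0"
    using c K by (simp add: q_def)
  have r_le: "r \<le> r0 / 2" "r \<le> 1" "r \<le> 1 / c" "r \<le> q powr (1 / \<delta>)"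
    by (simp_all add: r_def)
  have r: "0 < r" "r \<le> 1" "c * r \<le> 1" "r < r0"
    using r0 c q r_le by (simp_all add: r_def pos_le_divide_eq mult.commute)
  have "r powr \<delta> \<le> (q powr (1 / \<delta>)) powr \<delta>"
    using r(1) r_le(4) \<delta> by (intro powr_mono2) auto
  then have "r powr \<delta> \<le> q"
    using \<delta> q by (simp add: powr_powr)
  then have "(K + 1) * r powr \<delta> \<le> (K + 1) * q"
    using K by (intro mult_left_mono) auto
  moreover have "(K + 1) * q = c / 4"
    unfolding q_def using K by (simp add: field_simps)
  moreover have "K * r powr \<delta> \<le> (K + 1) * r powr \<delta>"
    by (simp add: algebra_simps)
  ultimately have "K * r powr \<delta> \<le> c / 4"
    by linarith
  then show ?thesis
    using r by blast
qed

section \<open>The characteristic function of an i.i.d. integer sequence\<close>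

lemma int_charfun_eq_integral:
  fixes Z :: "'a \<Rightarrow> int"
  assumes "prob_space M" and Z: "Z \<in> measurable M (count_space UNIV)"
  shows "int_charfun M Z \<theta> = (\<integral>\<omega>. cis (\<theta> * of_int (Z \<omega>)) \<partial>M)"
proof -
  interpret prob_space M by fact
  define p where "p k = measure M {\<omega>\<in>space M. Z \<omega> = k}" for k
  define f where "f k = cis (\<theta> * of_int k)" for k :: int
  have p_nonneg: "p k \<ge> 0" for k
    unfolding p_def by simp
  have distr_Z: "distr M (count_space UNIV) Z = density (count_space UNIV) (\<lambda>k. ennreal (p k))"
  proof (rule measure_eqI_countable'[where A=UNIV])
    fix k :: int
    have "Z -` {k} \<inter> space M = {\<omega>\<in>space M. Z \<omega> = k}"
      by auto
    then show "emeasure (distr M (count_space UNIV) Z) {k}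
        = emeasure (density (count_space UNIV) (\<lambda>k. ennreal (p k))) {k}"
      using Z by (simp add: emeasure_distr emeasure_density p_def emeasure_eq_measure)
  qed auto
  have "integrable (distr M (count_space UNIV) Z) f"
    using prob_space_distr[OF Z]
    by (intro finite_measure.integrable_const_bound[where B=1]) (auto simp: prob_space_def f_def)
  then have summable: "integrable (count_space UNIV) (\<lambda>k. p k *\<^sub>R f k)"
    unfolding distr_Z by (subst (asm) integrable_density) (auto simp: p_nonneg)
  have "(\<integral>\<omega>. cis (\<theta> * of_int (Z \<omega>)) \<partial>M) = integral\<^sup>L (distr M (count_space UNIV) Z) f"
    unfolding f_def using Z by (simp add: integral_distr)
  also have "\<dots> = integral\<^sup>L (count_space UNIV) (\<lambda>k. p k *\<^sub>R f k)"
    unfolding distr_Z by (rule integral_density) (auto simp: p_nonneg)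
  also have "\<dots> = infsetsum (\<lambda>k. p k *\<^sub>R f k) UNIV"
    by (simp add: infsetsum_def)
  also have "\<dots> = infsum (\<lambda>k. p k *\<^sub>R f k) UNIV"
    using summable by (intro infsetsum_infsum) (simp add: Infinite_Set_Sum.abs_summable_on_def)
  also have "\<dots> = int_charfun M Z \<theta>"
    unfolding int_charfun_def f_def p_def by (simp add: scaleR_conv_of_real mult.commute)
  finally show ?thesis ..
qed

lemma int_subgroup_generated_least:
  assumes "0 \<in> G" "\<And>x y. x \<in> G \<Longrightarrow> y \<in> G \<Longrightarrow> x - y \<in> G" "A \<subseteq> G"
  shows "int_subgroup_generated A \<subseteq> G"
  unfolding int_subgroup_generated_def using assms by (intro Inter_lower) auto

lemma cmod_diff_square_unimodular:
  fixes z a :: complex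
  assumes "cmod z = 1" "cmod a = 1"
  shows "(cmod (z - a))\<^sup>2 = 2 - 2 * Re (cnj a * z)"
proof -
  have "(Re z)\<^sup>2 + (Im z)\<^sup>2 = 1" "(Re a)\<^sup>2 + (Im a)\<^sup>2 = 1"
    using assms cmod_power2[of z] cmod_power2[of a] by auto
  then show ?thesis
    using cmod_power2[of "z - a"] by (simp add: power2_eq_square algebra_simps)
qed

lemma (in prob_space) AE_eq_expectation_if_unimodular:
  fixes Z :: "'a \<Rightarrow> complex"
  assumes [measurable]: "Z \<in> borel_measurable M"
    and Z: "\<And>\<omega>. \<omega> \<in> space M \<Longrightarrow> cmod (Z \<omega>) = 1" and EZ: "cmod (expectation Z) = 1"
  shows "AE \<omega> in M. Z \<omega> = expectation Z"
proof -
  define a where "a = expectation Z"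
  have int_Z: "integrable M Z"
    using Z by (intro integrable_const_bound[where B=1]) auto
  have square: "(cmod (Z \<omega> - a))\<^sup>2 = 2 - 2 * Re (cnj a * Z \<omega>)" if "\<omega> \<in> space M" for \<omega>
    using cmod_diff_square_unimodular Z[OF that] EZ by (simp add: a_def)
  have "(\<integral>\<omega>. (cmod (Z \<omega> - a))\<^sup>2 \<partial>M) = (\<integral>\<omega>. 2 - 2 * Re (cnj a * Z \<omega>) \<partial>M)"
    using square by (intro Bochner_Integration.integral_cong) auto
  also have "\<dots> = 2 - 2 * Re (cnj a * a)"
    using int_Z by (simp add: prob_space a_def)
  also have "\<dots> = 0"
    using complex_norm_square[of a] EZ by (simp add: a_def mult.commute)
  finally have "(\<integral>\<omega>. (cmod (Z \<omega> - a))\<^sup>2 \<partial>M) = 0" .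
  moreover have "integrable M (\<lambda>\<omega>. (cmod (Z \<omega> - a))\<^sup>2)"
    using int_Z by (subst Bochner_Integration.integrable_cong[OF refl square]) auto
  ultimately have "AE \<omega> in M. (cmod (Z \<omega> - a))\<^sup>2 = 0"
    by (subst (asm) integral_nonneg_eq_0_iff_AE) auto
  then show ?thesis
    unfolding a_def by eventually_elim simp
qed

lemma cis_eq_1_imp_eq_0:
  assumes "cis \<theta> = 1" "\<bar>\<theta>\<bar> \<le> pi"
  shows "\<theta> = 0"
proof -
  have "cos \<theta> = 1"
    using assms(1) by (metis cis.sel(1) one_complex.sel(1))
  then obtain m :: int where m: "\<theta> = of_int m * 2 * pi"
    by (auto simp: cos_one_2pi_int)
  show ?thesis
  proof (rule ccontr)
    assume "\<theta> \<noteq> 0"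
    then have "m \<noteq> 0"
      using m by auto
    then have "\<bar>of_int m\<bar> \<ge> (1::real)"
      by linarith
    then have "\<bar>\<theta>\<bar> \<ge> 2 * pi"
      using m pi_gt_zero by (simp add: abs_mult)
    then show False
      using assms(2) pi_gt_zero by linarith
  qed
qed

lemma cis_sum: "cis (sum f A) = (\<Prod>a\<in>A. cis (f a))"
  by (induction A rule: infinite_finite_induct) (auto simp: cis_mult[symmetric])

locale iid_int_sequence = prob_space +
  fixes X :: "nat \<Rightarrow> 'a \<Rightarrow> int"
  assumes measurable_X [measurable]: "\<And>j. j \<ge> 1 \<Longrightarrow> X j \<in> measurable M (count_space UNIV)"
    and indep_X: "indep_vars (\<lambda>_. count_space UNIV) X {1..}"
    and distr_X: "\<And>j. j \<ge> 1 \<Longrightarrow> distr M (count_space UNIV) (X j) = distr M (count_space UNIV) (X 1)"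
begin

definition S :: "nat \<Rightarrow> 'a \<Rightarrow> int" where
  "S n \<omega> = (\<Sum>j\<in>{1..n}. X j \<omega>)"

definition \<phi> :: "real \<Rightarrow> complex" where
  "\<phi> \<theta> = (\<integral>\<omega>. cis (\<theta> * of_int (X 1 \<omega>)) \<partial>M)"

lemma borel_measurable_S [measurable]: "(\<lambda>\<omega>. real_of_int (S n \<omega>)) \<in> borel_measurable M"
  unfolding S_def of_int_sum by measurable

lemma measurable_S [measurable]: "S n \<in> measurable M (count_space UNIV)"
proof (subst measurable_count_space_eq2_countable, safe)
  fix k :: int
  have "S n -` {k} \<inter> space M = {\<omega> \<in> space M. real_of_int (S n \<omega>) = real_of_int k}"
    by auto
  also have "\<dots> \<in> sets M"
    by measurable
  finally show "S n -` {k} \<inter> space M \<in> sets M" .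
qed auto

lemma integral_cis_X:
  assumes "j \<ge> 1"
  shows "(\<integral>\<omega>. cis (\<theta> * of_int (X j \<omega>)) \<partial>M) = \<phi> \<theta>"
proof -
  have "(\<integral>\<omega>. cis (\<theta> * of_int (X j \<omega>)) \<partial>M)
      = (\<integral>k. cis (\<theta> * of_int k) \<partial>distr M (count_space UNIV) (X j))"
    using measurable_X[OF assms] by (simp add: integral_distr)
  also have "\<dots> = (\<integral>k. cis (\<theta> * of_int k) \<partial>distr M (count_space UNIV) (X 1))"
    using distr_X[OF assms] by simp
  also have "\<dots> = \<phi> \<theta>"
    unfolding \<phi>_def using measurable_X[of 1] by (simp add: integral_distr)
  finally show ?thesis .
qed

lemma integral_cis_S: "(\<integral>\<omega>. cis (\<theta> * of_int (S n \<omega>)) \<partial>M) = \<phi> \<theta> ^ n"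
proof -
  have indep: "indep_vars (\<lambda>_. borel) (\<lambda>j \<omega>. cis (\<theta> * of_int (X j \<omega>))) {1..n}"
    using indep_vars_compose2[OF indep_vars_subset[OF indep_X, of "{1..n}"],
        of "\<lambda>j k. cis (\<theta> * of_int k)" "\<lambda>_. borel"] by auto
  have "(\<integral>\<omega>. cis (\<theta> * of_int (S n \<omega>)) \<partial>M) = (\<integral>\<omega>. (\<Prod>j\<in>{1..n}. cis (\<theta> * of_int (X j \<omega>))) \<partial>M)"
    unfolding S_def of_int_sum sum_distrib_left cis_sum ..
  also have "\<dots> = (\<Prod>j\<in>{1..n}. \<integral>\<omega>. cis (\<theta> * of_int (X j \<omega>)) \<partial>M)"
  proof (rule indep_vars_lebesgue_integral[OF _ indep])
    fix j assume "j \<in> {1..n}"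
    then have "j \<ge> 1"
      by simp
    then show "integrable M (\<lambda>\<omega>. cis (\<theta> * of_int (X j \<omega>)))"
      by (intro integrable_const_bound[where B=1] AE_I2) (simp, measurable)
  qed simp
  also have "\<dots> = \<phi> \<theta> ^ n"
    by (simp add: integral_cis_X)
  finally show ?thesis .
qed

lemma integral_cos_S:
  "(\<integral>\<omega>. cos (\<theta> * (of_int (S n \<omega>) - of_int l)) \<partial>M) = Re (cis (-\<theta> * of_int l) * \<phi> \<theta> ^ n)"
proof -
  have "cos (\<theta> * (of_int (S n \<omega>) - of_int l)) = Re (cis (-\<theta> * of_int l) * cis (\<theta> * of_int (S n \<omega>)))" for \<omega>
    by (simp add: cis_mult algebra_simps)
  then have "(\<integral>\<omega>. cos (\<theta> * (of_int (S n \<omega>) - of_int l)) \<partial>M)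
      = (\<integral>\<omega>. Re (cis (-\<theta> * of_int l) * cis (\<theta> * of_int (S n \<omega>))) \<partial>M)"
    by (simp only:)
  also have "\<dots> = Re (\<integral>\<omega>. cis (-\<theta> * of_int l) * cis (\<theta> * of_int (S n \<omega>)) \<partial>M)"
    by (intro integral_Re integrable_const_bound[where B=1] AE_I2) (simp add: norm_mult, measurable)
  also have "\<dots> = Re (cis (-\<theta> * of_int l) * \<phi> \<theta> ^ n)"
    by (simp add: integral_cis_S)
  finally show ?thesis .
qed

lemma fourier_inversion:
  fixes n :: nat and l :: int
  defines "g \<equiv> \<lambda>\<theta>. indicator {-pi..pi} \<theta> * Re (cis (-\<theta> * of_int l) * \<phi> \<theta> ^ n)"
  shows "integrable lborel g" and "integral\<^sup>L lborel g = 2 * pi * prob {\<omega>\<in>space M. S n \<omega> = l}"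
proof -
  interpret pair_sigma_finite M lborel
    by (simp add: pair_sigma_finite_def sigma_finite_measure_axioms lborel.sigma_finite_measure_axioms)
  define f where
    "f \<omega> \<theta> = indicator {-pi..pi} \<theta> * cos (\<theta> * (real_of_int (S n \<omega>) - real_of_int l))" for \<omega> \<theta>
  have "integrable (M \<Otimes>\<^sub>M lborel) (indicator (space M \<times> {-pi..pi}) :: _ \<Rightarrow> real)"
    by (subst integrable_indicator_iff)
      (simp add: Times_Int_Times lborel.emeasure_pair_measure_Times space_pair_measure
        emeasure_space_1 ennreal_mult_less_top)
  moreover have "case_prod f \<in> borel_measurable (M \<Otimes>\<^sub>M lborel)"
    unfolding f_def by measurable
  ultimately have f: "integrable (M \<Otimes>\<^sub>M lborel) (case_prod f)"
    by (rule Bochner_Integration.integrable_bound)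
      (auto simp: f_def space_pair_measure indicator_def intro!: AE_I2)
  have inner_M: "(\<integral>\<omega>. f \<omega> \<theta> \<partial>M) = g \<theta>" for \<theta>
    unfolding f_def g_def by (simp add: integral_cos_S)
  have inner_lborel: "(\<integral>\<theta>. f \<omega> \<theta> \<partial>lborel) = 2 * pi * indicator {\<omega>\<in>space M. S n \<omega> = l} \<omega>"
    if "\<omega> \<in> space M" for \<omega>
  proof -
    have "(\<integral>\<theta>. f \<omega> \<theta> \<partial>lborel)
        = (\<integral>\<theta>. indicator {-pi..pi} \<theta> * cos (\<theta> * of_int (S n \<omega> - l)) \<partial>lborel)"
      unfolding f_def by simp
    also have "\<dots> = (if S n \<omega> - l = 0 then 2 * pi else 0)"
      by (rule has_integral_imp_lborel_indicator(2)[OF _ has_integral_cos_int]) (intro continuous_intros)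
    finally show ?thesis
      using that by (simp add: indicator_def)
  qed
  show "integrable lborel g"
    using integrable_snd[OF f] by (simp add: inner_M)
  have "integral\<^sup>L lborel g = (\<integral>\<theta>. (\<integral>\<omega>. f \<omega> \<theta> \<partial>M) \<partial>lborel)"
    by (simp add: inner_M)
  also have "\<dots> = (\<integral>\<omega>. (\<integral>\<theta>. f \<omega> \<theta> \<partial>lborel) \<partial>M)"
    by (rule Fubini_integral[OF f])
  also have "\<dots> = (\<integral>\<omega>. 2 * pi * indicator {\<omega>\<in>space M. S n \<omega> = l} \<omega> \<partial>M)"
    by (rule Bochner_Integration.integral_cong[OF refl inner_lborel])
  also have "\<dots> = 2 * pi * prob {\<omega>\<in>space M. S n \<omega> = l}"
    by simp
  finally show "integral\<^sup>L lborel g = 2 * pi * prob {\<omega>\<in>space M. S n \<omega> = l}" .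
qed

lemma \<phi>_0: "\<phi> 0 = 1"
  unfolding \<phi>_def by (simp add: prob_space)

lemma norm_\<phi>_le_1: "norm (\<phi> \<theta>) \<le> 1"
  unfolding \<phi>_def using integral_norm_bound[of M "\<lambda>\<omega>. cis (\<theta> * of_int (X 1 \<omega>))"]
  by (simp add: prob_space)

lemma isCont_\<phi>: "isCont \<phi> \<theta>"
  unfolding continuous_at_sequentially comp_def \<phi>_def
  by (auto intro!: integral_dominated_convergence[where w="\<lambda>_. 1"] tendsto_intros)

lemma cis_eq_1_if_norm_\<phi>_eq_1:
  assumes A1: "aperiodic_A1 M (X 1)" and norm_1: "norm (\<phi> \<theta>) = 1"
  shows "cis (\<theta> * of_int m) = 1"
proof -
  \<comment> \<open>\<open>cis (\<theta> k)\<close> is constant on the support of \<open>X 1\<close>, so its periods contain all differences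
    of support points, and these generate \<open>\<int>\<close> by (A1).\<close>
  define p where "p k = prob {\<omega>\<in>space M. X 1 \<omega> = k}" for k
  have AE_const: "AE \<omega> in M. cis (\<theta> * of_int (X 1 \<omega>)) = \<phi> \<theta>"
    using AE_eq_expectation_if_unimodular[of "\<lambda>\<omega>. cis (\<theta> * of_int (X 1 \<omega>))"] norm_1
    unfolding \<phi>_def by simp
  have support: "cis (\<theta> * of_int k) = \<phi> \<theta>" if "p k > 0" for k
  proof (rule ccontr)
    assume ne: "cis (\<theta> * of_int k) \<noteq> \<phi> \<theta>"
    have "AE \<omega> in M. \<omega> \<notin> {\<omega>\<in>space M. X 1 \<omega> = k}"
      using AE_const by eventually_elim (use ne in auto)
    then have "p k = 0"
      unfolding p_def by (subst prob_eq_0) auto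
    then show False
      using that by simp
  qed
  define H where "H = {m::int. cis (\<theta> * of_int m) = 1}"
  have H_subgroup: "0 \<in> H" "\<And>x y. x \<in> H \<Longrightarrow> y \<in> H \<Longrightarrow> x - y \<in> H"
    unfolding H_def by (auto simp: algebra_simps cis_divide[symmetric])
  have generated: "int_subgroup_generated {y + k | k. p k > 0} = UNIV" for y
    using A1 unfolding aperiodic_A1_def p_def by blast
  have "\<exists>k0. p k0 > 0"
  proof (rule ccontr)
    assume "\<nexists>k0. p k0 > 0"
    then have "int_subgroup_generated {0 + k | k. p k > 0} \<subseteq> {0}"
      by (intro int_subgroup_generated_least) auto
    then show False
      using generated[of 0] by (metis UNIV_I singletonD subsetD zero_neq_one)
  qed
  then obtain k0 where k0: "p k0 > 0"
    by blast
  have "{-k0 + k | k. p k > 0} \<subseteq> H"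
  proof safe
    fix k assume "p k > 0"
    have "\<phi> \<theta> \<noteq> 0"
      using norm_1 by auto
    then show "-k0 + k \<in> H"
      unfolding H_def using support[OF \<open>p k > 0\<close>] support[OF k0]
      by (simp add: algebra_simps cis_divide[symmetric])
  qed
  then have "int_subgroup_generated {-k0 + k | k. p k > 0} \<subseteq> H"
    using H_subgroup by (intro int_subgroup_generated_least)
  then show ?thesis
    using generated[of "-k0"] by (auto simp: H_def)
qed

lemma norm_\<phi>_bounded_away_from_1:
  assumes A1: "aperiodic_A1 M (X 1)" and r: "0 < r" "r \<le> pi"
  shows "\<exists>\<rho><1. \<forall>\<theta>. r \<le> \<bar>\<theta>\<bar> \<and> \<bar>\<theta>\<bar> \<le> pi \<longrightarrow> norm (\<phi> \<theta>) \<le> \<rho>"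
proof -
  define K where "K = {-pi..-r} \<union> {r..pi}"
  have K: "compact K" "K \<noteq> {}"
    using r unfolding K_def by auto
  obtain x where x: "x \<in> K" "\<forall>y\<in>K. norm (\<phi> y) \<le> norm (\<phi> x)"
    using continuous_attains_sup[OF K, of "\<lambda>\<theta>. norm (\<phi> \<theta>)"]
    by (auto intro!: continuous_at_imp_continuous_on continuous_intros isCont_\<phi>)
  have "norm (\<phi> x) \<noteq> 1"
  proof
    assume "norm (\<phi> x) = 1"
    then have "cis (x * of_int 1) = 1"
      by (rule cis_eq_1_if_norm_\<phi>_eq_1[OF A1])
    then have "x = 0"
      using x(1) r unfolding K_def by (intro cis_eq_1_imp_eq_0) auto
    then show False
      using x(1) r unfolding K_def by auto
  qed
  then have "norm (\<phi> x) < 1"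
    using norm_\<phi>_le_1[of x] by linarith
  moreover have "\<theta> \<in> K" if "r \<le> \<bar>\<theta>\<bar>" "\<bar>\<theta>\<bar> \<le> pi" for \<theta>
    using that unfolding K_def by (cases "\<theta> \<ge> 0") auto
  ultimately show ?thesis
    using x(2) by blast
qed

end

section \<open>Estimates for the local limit theorem\<close>

lemma local_expansion_bounds:
  fixes z :: complex and c K \<epsilon> t :: real
  assumes c: "c > 0" and K: "K \<ge> 0" and \<epsilon>: "0 < \<epsilon>" "\<epsilon> \<le> 1"
    and t: "0 \<le> t" "t \<le> 1" "c * t \<le> 1" "K * t powr \<epsilon> \<le> c / 4"
    and z: "norm (z - (1 - of_real (c * t))) \<le> K * t powr (1 + \<epsilon>)"
  shows "norm z \<le> exp (-(c * t / 2))"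
    and "norm (z - complex_of_real (exp (-(c * t)))) \<le> (K + c\<^sup>2 / 2) * t powr (1 + \<epsilon>)"
proof -
  have "t powr (1 + \<epsilon>) = t * t powr \<epsilon>"
    using t by (cases "t = 0") (simp_all add: powr_add)
  then have small: "K * t powr (1 + \<epsilon>) \<le> c * t / 4"
    using mult_left_mono[OF t(4) t(1)] by (simp add: ac_simps)
  have "1 - complex_of_real (c * t) = complex_of_real (1 - c * t)"
    by simp
  then have norm_linear: "norm (1 - complex_of_real (c * t)) = 1 - c * t"
    using t(3) by (simp only: norm_of_real)
  have "norm z \<le> norm (1 - complex_of_real (c * t)) + norm (z - (1 - of_real (c * t)))"
    by (metis add.commute diff_add_cancel norm_triangle_ineq)
  also have "\<dots> \<le> 1 + (-(c * t / 2))"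
    using z small norm_linear mult_nonneg_nonneg[of c t] c t(1) by linarith
  also have "\<dots> \<le> exp (-(c * t / 2))"
    by (rule exp_ge_add_one_self)
  finally show "norm z \<le> exp (-(c * t / 2))" .
  have "t\<^sup>2 \<le> t powr (1 + \<epsilon>)"
  proof (cases "t = 0")
    case False
    then have "t\<^sup>2 = t powr 2"
      using t by (simp add: powr_numeral)
    also have "\<dots> \<le> t powr (1 + \<epsilon>)"
      using t \<epsilon> by (intro powr_mono') auto
    finally show ?thesis .
  qed simp
  have "\<bar>1 - c * t - exp (-(c * t))\<bar> \<le> (c * t)\<^sup>2 / 2"
    using abs_one_minus_minus_exp_neg_le[of "c * t"] c t(1) by simp
  also have "\<dots> = c\<^sup>2 / 2 * t\<^sup>2"
    by (simp add: power_mult_distrib)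
  also have "\<dots> \<le> c\<^sup>2 / 2 * t powr (1 + \<epsilon>)"
    using \<open>t\<^sup>2 \<le> t powr (1 + \<epsilon>)\<close> by (intro mult_left_mono) auto
  finally have "\<bar>1 - c * t - exp (-(c * t))\<bar> \<le> c\<^sup>2 / 2 * t powr (1 + \<epsilon>)" .
  moreover have "z - complex_of_real (exp (-(c * t)))
      = (z - (1 - of_real (c * t))) + of_real (1 - c * t - exp (-(c * t)))"
    by simp
  then have "norm (z - complex_of_real (exp (-(c * t))))
      \<le> norm (z - (1 - of_real (c * t))) + \<bar>1 - c * t - exp (-(c * t))\<bar>"
    by (metis norm_of_real norm_triangle_ineq)
  ultimately show "norm (z - complex_of_real (exp (-(c * t)))) \<le> (K + c\<^sup>2 / 2) * t powr (1 + \<epsilon>)"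
    using z by (simp add: distrib_right)
qed

lemma norm_power_diff_exp_le:
  fixes z :: complex and c t \<epsilon> K :: real and n :: nat
  assumes c: "c > 0" and t: "t \<ge> 0" and K: "K \<ge> 0" and \<epsilon>: "0 \<le> \<epsilon>" "\<epsilon> \<le> 1" and n: "n \<ge> 2"
    and z: "norm z \<le> exp (-(c * t / 2))"
      "norm (z - complex_of_real (exp (-(c * t)))) \<le> K * t powr (1 + \<epsilon>)"
  shows "norm (z ^ n - complex_of_real (exp (-(c * n * t))))
           \<le> K * (8 / c + 128 / c\<^sup>2) * n powr (-\<epsilon>) * exp (-(c / 8 * n * t))"
proof -
  define B where "B = exp (-(c * t / 2))"
  have "B ^ (n - 1) = exp (real (n - 1) * (-(c * t / 2)))"
    unfolding B_def by (rule exp_of_nat_mult[symmetric])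
  also have "\<dots> \<le> exp (-(c / 4 * n * t))"
    using n c t mult_right_mono[of "real n / 2" "real (n - 1)" "c * t / 2"] by (simp add: algebra_simps)
  finally have B_power: "B ^ (n - 1) \<le> exp (-(c / 4 * n * t))" .
  have "exp (-(c * n * t)) = exp (-(c * t)) ^ n"
    by (subst exp_of_nat_mult[symmetric]) (simp add: algebra_simps)
  then have "complex_of_real (exp (-(c * n * t))) = complex_of_real (exp (-(c * t))) ^ n"
    by simp
  moreover have "norm (complex_of_real (exp (-(c * t)))) \<le> B"
    unfolding B_def using c t by simp
  ultimately have "norm (z ^ n - complex_of_real (exp (-(c * n * t))))
      \<le> n * B ^ (n - 1) * norm (z - complex_of_real (exp (-(c * t))))"
    using norm_power_diff_le[OF z(1)[folded B_def], of _ "n - 1"] n by simp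
  also have "\<dots> \<le> n * exp (-(c / 4 * n * t)) * (K * t powr (1 + \<epsilon>))"
    using B_power z(2) by (intro mult_mono mult_left_mono) (auto simp: B_def)
  \<comment> \<open>half of the remaining decay absorbs the factor \<open>(n t) powr (1 + \<epsilon>)\<close>\<close>
  also have "\<dots> = K * n powr (-\<epsilon>) * ((n * t) powr (1 + \<epsilon>) * exp (-(c / 8) * (n * t))) * exp (-(c / 8 * n * t))"
    using n t by (simp add: powr_mult powr_add powr_minus exp_add[symmetric] field_simps)
  also have "\<dots> \<le> K * n powr (-\<epsilon>) * (1 / (c / 8) + 2 / (c / 8)\<^sup>2) * exp (-(c / 8 * n * t))"
    using powr_mult_exp_neg_le[of "n * t" "c / 8" "1 + \<epsilon>"] c t K \<epsilon> by (intro mult_right_mono mult_left_mono) auto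
  finally show ?thesis
    by (simp add: power_divide field_simps)
qed

lemma exp_abs_cos_integral_approx_cauchy:
  fixes c :: real and n :: nat and l :: int
  assumes c: "c > 0" and n: "n > 0"
  shows "\<bar>n / (2 * pi) * (2 * (c * n) * (1 - exp (-(c * n) * pi) * cos (of_int l * pi)) / ((c * n)\<^sup>2 + (of_int l)\<^sup>2))
           - 1 / pi * (c / (c\<^sup>2 + (of_int l / n)\<^sup>2))\<bar> \<le> 1 / (pi\<^sup>2 * c\<^sup>2) * (1 / n)"
proof -
  define T where "T = 1 / pi * (c / (c\<^sup>2 + (of_int l / n)\<^sup>2))"
  define q where "q = exp (-(c * n) * pi) * cos (of_int l * pi)"
  define D where "D = (c * n)\<^sup>2 + (of_int l)\<^sup>2"
  have D: "D > 0"
    unfolding D_def using c n by (intro add_pos_nonneg) auto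
  have "c\<^sup>2 + (of_int l / n)\<^sup>2 = D / n\<^sup>2"
    unfolding D_def using n by (simp add: field_simps power2_eq_square)
  then have T_eq: "T = c * n\<^sup>2 / (pi * D)"
    unfolding T_def using n D by (simp add: field_simps)
  have integral_eq: "n / (2 * pi) * (2 * (c * n) * (1 - q) / D) = T * (1 - q)"
    unfolding T_eq using D n by (simp add: field_simps power2_eq_square)
  have "c / (c\<^sup>2 + (of_int l / n)\<^sup>2) \<le> c / c\<^sup>2"
    using c by (intro divide_left_mono) (auto simp: add_pos_nonneg)
  then have "1 / pi * (c / (c\<^sup>2 + (of_int l / n)\<^sup>2)) \<le> 1 / pi * (1 / c)"
    using c by (intro mult_left_mono) (auto simp: power2_eq_square)
  then have T: "T \<le> 1 / (pi * c)" "T \<ge> 0"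
    unfolding T_def using c by simp_all
  have "c * n * pi \<le> exp (c * n * pi)"
    using exp_ge_add_one_self[of "c * n * pi"] by linarith
  then have "exp (-(c * n * pi)) \<le> 1 / (c * n * pi)"
    using c n by (simp add: exp_minus inverse_eq_divide divide_left_mono)
  moreover have "\<bar>q\<bar> \<le> exp (-(c * n * pi))"
    unfolding q_def by (simp add: abs_mult mult_left_le)
  ultimately have q: "\<bar>q\<bar> \<le> 1 / (c * n * pi)"
    by linarith
  have "\<bar>T * (1 - q) - T\<bar> = T * \<bar>q\<bar>"
    using T(2) by (simp add: abs_mult algebra_simps)
  also have "\<dots> \<le> 1 / (pi * c) * (1 / (c * n * pi))"
    using T q c by (intro mult_mono) auto
  also have "\<dots> = 1 / (pi\<^sup>2 * c\<^sup>2) * (1 / n)"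
    by (simp add: power2_eq_square)
  finally show ?thesis
    unfolding q_def[symmetric] D_def[symmetric] T_def[symmetric] integral_eq .
qed

context iid_int_sequence
begin

context
  fixes c K \<epsilon> r \<rho> :: real
  assumes c: "c > 0" and K: "K \<ge> 0" and \<epsilon>: "0 < \<epsilon>" "\<epsilon> \<le> 1"
    and r: "0 < r" "r \<le> 1" "c * r \<le> 1" "K * r powr \<epsilon> \<le> c / 4"
    and near: "\<And>\<theta>. \<bar>\<theta>\<bar> \<le> r \<Longrightarrow> norm (\<phi> \<theta> - (1 - of_real (c * \<bar>\<theta>\<bar>))) \<le> K * \<bar>\<theta>\<bar> powr (1 + \<epsilon>)"
    and far: "\<And>\<theta>. r \<le> \<bar>\<theta>\<bar> \<Longrightarrow> \<bar>\<theta>\<bar> \<le> pi \<Longrightarrow> norm (\<phi> \<theta>) \<le> \<rho>"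
    and \<rho>: "exp (-(c * r)) \<le> \<rho>"
begin

lemma norm_\<phi>_power_minus_exp_le:
  assumes n: "n \<ge> 2" and \<theta>: "\<bar>\<theta>\<bar> \<le> pi"
  shows "norm (\<phi> \<theta> ^ n - complex_of_real (exp (-(c * n * \<bar>\<theta>\<bar>))))
           \<le> (K + c\<^sup>2 / 2) * (8 / c + 128 / c\<^sup>2) * n powr (-\<epsilon>) * exp (-(c / 8 * n * \<bar>\<theta>\<bar>)) + 2 * \<rho> ^ n"
proof (cases "\<bar>\<theta>\<bar> \<le> r")
  case True
  have "\<bar>\<theta>\<bar> powr \<epsilon> \<le> r powr \<epsilon>"
    using True \<epsilon> by (intro powr_mono2) auto
  then have "K * \<bar>\<theta>\<bar> powr \<epsilon> \<le> c / 4"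
    using mult_left_mono[OF _ K] r(4) by (meson order_trans)
  moreover have "c * \<bar>\<theta>\<bar> \<le> 1"
    using mult_left_mono[OF True less_imp_le[OF c]] r(3) by linarith
  moreover have "\<bar>\<theta>\<bar> \<le> 1"
    using True r by linarith
  ultimately have "\<bar>\<theta>\<bar> \<le> 1" "c * \<bar>\<theta>\<bar> \<le> 1" "K * \<bar>\<theta>\<bar> powr \<epsilon> \<le> c / 4"
    by auto
  note bounds = local_expansion_bounds[OF c K \<epsilon> abs_ge_zero this near[OF True]]
  then have "norm (\<phi> \<theta> ^ n - complex_of_real (exp (-(c * n * \<bar>\<theta>\<bar>))))
      \<le> (K + c\<^sup>2 / 2) * (8 / c + 128 / c\<^sup>2) * n powr (-\<epsilon>) * exp (-(c / 8 * n * \<bar>\<theta>\<bar>))"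
    using norm_power_diff_exp_le[OF c abs_ge_zero _ _ \<epsilon>(2) n bounds] K c \<epsilon> by simp
  then show ?thesis
    using \<rho> by (smt (verit) exp_ge_zero zero_le_power)
next
  case False
  have "exp (-(c * \<bar>\<theta>\<bar>)) \<le> \<rho>"
    using False c \<rho> by (smt (verit) exp_mono mult_left_mono)
  then have "exp (-(c * \<bar>\<theta>\<bar>)) ^ n \<le> \<rho> ^ n"
    by (simp add: power_mono)
  moreover have "exp (-(c * n * \<bar>\<theta>\<bar>)) = exp (-(c * \<bar>\<theta>\<bar>)) ^ n"
    by (subst exp_of_nat_mult[symmetric]) (simp add: algebra_simps)
  ultimately have "norm (complex_of_real (exp (-(c * n * \<bar>\<theta>\<bar>)))) \<le> \<rho> ^ n"
    by (simp add: norm_power)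
  moreover have "norm (\<phi> \<theta> ^ n) \<le> \<rho> ^ n"
    unfolding norm_power using far False \<theta> by (intro power_mono) auto
  ultimately have "norm (\<phi> \<theta> ^ n - complex_of_real (exp (-(c * n * \<bar>\<theta>\<bar>)))) \<le> 2 * \<rho> ^ n"
    by (smt (verit) norm_triangle_ineq4)
  moreover have "0 \<le> (K + c\<^sup>2 / 2) * (8 / c + 128 / c\<^sup>2) * n powr (-\<epsilon>) * exp (-(c / 8 * n * \<bar>\<theta>\<bar>))"
    using K c by simp
  ultimately show ?thesis
    by linarith
qed

lemma inversion_integral_minus_exp_integral_le:
  fixes l :: int
  assumes n: "n \<ge> 2"
  shows "\<bar>2 * pi * prob {\<omega>\<in>space M. S n \<omega> = l}
           - 2 * (c * n) * (1 - exp (-(c * n) * pi) * cos (of_int l * pi)) / ((c * n)\<^sup>2 + (of_int l)\<^sup>2)\<bar>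
         \<le> (K + c\<^sup>2 / 2) * (8 / c + 128 / c\<^sup>2) * n powr (-\<epsilon>) * (16 / (c * n)) + 4 * pi * \<rho> ^ n"
proof -
  define A where "A = (K + c\<^sup>2 / 2) * (8 / c + 128 / c\<^sup>2) * n powr (-\<epsilon>)"
  define G where "G \<theta> = indicator {-pi..pi} \<theta> * Re (cis (-\<theta> * of_int l) * \<phi> \<theta> ^ n)" for \<theta>
  define H where "H \<theta> = indicator {-pi..pi} \<theta> * (exp (-(c * n) * \<bar>\<theta>\<bar>) * cos (\<theta> * of_int l))" for \<theta>
  define B where "B \<theta> = indicator {-pi..pi} \<theta> * (A * (exp (-(c / 8 * n) * \<bar>\<theta>\<bar>) * cos (\<theta> * of_int 0)) + 2 * \<rho> ^ n)" for \<theta>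
  have cn: "c * n > 0" "c / 8 * n > 0"
    using c n by auto
  have A: "A \<ge> 0"
    unfolding A_def using K c by simp
  define V where "V = 2 * (c * n) * (1 - exp (-(c * n) * pi) * cos (of_int l * pi)) / ((c * n)\<^sup>2 + (of_int l)\<^sup>2)"
  define I where
    "I = 2 * (c / 8 * n) * (1 - exp (-(c / 8 * n) * pi) * cos (of_int 0 * pi)) / ((c / 8 * n)\<^sup>2 + (of_int 0)\<^sup>2)"
  note G = fourier_inversion[of l n, folded G_def]
  have H: "integrable lborel H" "integral\<^sup>L lborel H = V"
    unfolding H_def V_def
    by (rule has_integral_imp_lborel_indicator[OF _ has_integral_exp_abs_cos[OF cn(1)]],
        intro continuous_intros)+
  have "((\<lambda>\<theta>. A * (exp (-(c / 8 * n) * \<bar>\<theta>\<bar>) * cos (\<theta> * of_int 0)) + 2 * \<rho> ^ n) has_integral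
      A * I + Henstock_Kurzweil_Integration.content {-pi..pi} *\<^sub>R (2 * \<rho> ^ n)) {-pi..pi}"
    unfolding I_def by (intro has_integral_add has_integral_mult_right has_integral_exp_abs_cos
        has_integral_const_real cn)
  then have B: "integrable lborel B"
    "integral\<^sup>L lborel B = A * I + Henstock_Kurzweil_Integration.content {-pi..pi} *\<^sub>R (2 * \<rho> ^ n)"
    unfolding B_def by (rule has_integral_imp_lborel_indicator[rotated], intro continuous_intros)+
  have G_H_B: "\<bar>G \<theta> - H \<theta>\<bar> \<le> B \<theta>" for \<theta>
  proof (cases "\<theta> \<in> {-pi..pi}")
    case True
    let ?w = "\<phi> \<theta> ^ n - complex_of_real (exp (-(c * n * \<bar>\<theta>\<bar>)))"
    have "G \<theta> - H \<theta> = Re (cis (-\<theta> * of_int l) * ?w)"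
      using True by (simp add: G_def H_def algebra_simps mult.commute)
    then have "\<bar>G \<theta> - H \<theta>\<bar> \<le> norm ?w"
      using abs_Re_le_cmod[of "cis (-\<theta> * of_int l) * ?w"] by (simp add: norm_mult)
    also have "\<dots> \<le> B \<theta>"
      using norm_\<phi>_power_minus_exp_le[OF n, of \<theta>] True by (simp add: B_def A_def abs_le_iff)
    finally show ?thesis .
  qed (simp add: G_def H_def B_def)
  have "\<bar>integral\<^sup>L lborel (\<lambda>\<theta>. G \<theta> - H \<theta>)\<bar> \<le> integral\<^sup>L lborel B"
    using G(1) H(1) B(1) G_H_B by (intro integral_abs_bound_integral) auto
  also have "integral\<^sup>L lborel B \<le> A * (16 / (c * n)) + 4 * pi * \<rho> ^ n"
  proof -
    have "I = 2 * (1 - exp (-(c / 8 * n) * pi)) / (c / 8 * n)"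
      unfolding I_def using cn by (simp add: power2_eq_square)
    also have "\<dots> \<le> 2 / (c / 8 * n)"
      using cn by (intro divide_right_mono) auto
    finally have "I \<le> 16 / (c * n)"
      by simp
    then have "A * I \<le> A * (16 / (c * n))"
      using A by (rule mult_left_mono)
    then show ?thesis
      using B(2) by simp
  qed
  finally show ?thesis
    using G H by (simp add: A_def V_def)
qed

lemma local_limit_estimate:
  fixes l :: int
  assumes n: "n \<ge> 2"
  shows "\<bar>n * prob {\<omega>\<in>space M. S n \<omega> = l} - 1 / pi * (c / (c\<^sup>2 + (of_int l / n)\<^sup>2))\<bar>
         \<le> (K + c\<^sup>2 / 2) * (8 / c + 128 / c\<^sup>2) * (8 / (pi * c)) * n powr (-\<epsilon>)
            + 2 * (n * \<rho> ^ n) + 1 / (pi\<^sup>2 * c\<^sup>2) * (1 / n)"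
proof -
  define A where "A = (K + c\<^sup>2 / 2) * (8 / c + 128 / c\<^sup>2) * n powr (-\<epsilon>)"
  define P where "P = prob {\<omega>\<in>space M. S n \<omega> = l}"
  define V where "V = 2 * (c * n) * (1 - exp (-(c * n) * pi) * cos (of_int l * pi)) / ((c * n)\<^sup>2 + (of_int l)\<^sup>2)"
  define T where "T = 1 / pi * (c / (c\<^sup>2 + (of_int l / n)\<^sup>2))"
  have n0: "n > 0"
    using n by simp
  have "n * P - T = n / (2 * pi) * (2 * pi * P - V) + (n / (2 * pi) * V - T)"
    by (simp add: field_simps)
  then have "\<bar>n * P - T\<bar> \<le> \<bar>n / (2 * pi) * (2 * pi * P - V)\<bar> + \<bar>n / (2 * pi) * V - T\<bar>"
    by (metis abs_triangle_ineq)
  moreover have "\<bar>n / (2 * pi) * (2 * pi * P - V)\<bar> = n / (2 * pi) * \<bar>2 * pi * P - V\<bar>"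
    by (simp add: abs_mult)
  ultimately have "\<bar>n * P - T\<bar> \<le> n / (2 * pi) * \<bar>2 * pi * P - V\<bar> + \<bar>n / (2 * pi) * V - T\<bar>"
    by linarith
  also have "\<dots> \<le> n / (2 * pi) * (A * (16 / (c * n)) + 4 * pi * \<rho> ^ n) + 1 / (pi\<^sup>2 * c\<^sup>2) * (1 / n)"
    using inversion_integral_minus_exp_integral_le[OF n, of l] exp_abs_cos_integral_approx_cauchy[OF c n0, of l]
    unfolding A_def P_def V_def T_def by (intro add_mono mult_left_mono) auto
  also have "\<dots> = A * (8 / (pi * c)) + 2 * (n * \<rho> ^ n) + 1 / (pi\<^sup>2 * c\<^sup>2) * (1 / n)"
    using n0 c by (simp add: field_simps)
  finally show ?thesis
    unfolding A_def P_def T_def by (simp add: ac_simps)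
qed

end

lemma local_limit_theorem_rate:
  assumes A1: "aperiodic_A1 M (X 1)" and c: "c > 0" and K: "K \<ge> 0"
    and \<delta>: "0 < \<delta>" "\<delta> \<le> \<epsilon>" "\<delta> \<le> 1" and r0: "r0 > 0"
    and near: "\<And>\<theta>. \<theta> \<noteq> 0 \<Longrightarrow> \<bar>\<theta>\<bar> < r0 \<Longrightarrow>
                 norm (\<phi> \<theta> - (1 - of_real (c * \<bar>\<theta>\<bar>))) \<le> K * \<bar>\<theta>\<bar> powr (1 + \<epsilon>)"
  shows "\<exists>C>0. \<exists>N. \<forall>n\<ge>N. \<forall>l::int.
           \<bar>n * prob {\<omega>\<in>space M. S n \<omega> = l} - 1 / pi * (c / (c\<^sup>2 + (of_int l / n)\<^sup>2))\<bar>
             \<le> C * n powr (-\<delta>)"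
proof -
  obtain r where r: "0 < r" "r \<le> 1" "c * r \<le> 1" "r < r0" and Kr: "K * r powr \<delta> \<le> c / 4"
    using exists_small_radius[OF c K \<delta>(1) r0] by blast
  have near_r: "norm (\<phi> \<theta> - (1 - of_real (c * \<bar>\<theta>\<bar>))) \<le> K * \<bar>\<theta>\<bar> powr (1 + \<delta>)" if "\<bar>\<theta>\<bar> \<le> r" for \<theta>
  proof (cases "\<theta> = 0")
    case False
    have "\<bar>\<theta>\<bar> powr (1 + \<epsilon>) \<le> \<bar>\<theta>\<bar> powr (1 + \<delta>)"
      using that r \<delta> False by (intro powr_mono') auto
    then have "K * \<bar>\<theta>\<bar> powr (1 + \<epsilon>) \<le> K * \<bar>\<theta>\<bar> powr (1 + \<delta>)"
      using K by (rule mult_left_mono)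
    then show ?thesis
      using near[OF False] that r by linarith
  qed (simp add: \<phi>_0)
  obtain \<rho>1 where \<rho>1: "\<rho>1 < 1" "\<And>\<theta>. r \<le> \<bar>\<theta>\<bar> \<Longrightarrow> \<bar>\<theta>\<bar> \<le> pi \<Longrightarrow> norm (\<phi> \<theta>) \<le> \<rho>1"
    using norm_\<phi>_bounded_away_from_1[OF A1 r(1)] r(2) pi_gt3 by fastforce
  define \<rho> where "\<rho> = max \<rho>1 (exp (-(c * r)))"
  have \<rho>: "0 \<le> \<rho>" "\<rho> < 1"
    using \<rho>1(1) c r by (simp_all add: \<rho>_def le_max_iff_disj)
  have far: "norm (\<phi> \<theta>) \<le> \<rho>" if "r \<le> \<bar>\<theta>\<bar>" "\<bar>\<theta>\<bar> \<le> pi" for \<theta>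
    using \<rho>1(2)[OF that] by (simp add: \<rho>_def le_max_iff_disj)
  have exp_le_\<rho>: "exp (-(c * r)) \<le> \<rho>"
    by (simp add: \<rho>_def)
  obtain N where N: "\<And>n. n \<ge> N \<Longrightarrow> n * \<rho> ^ n \<le> n powr (-\<delta>)"
    using eventually_mult_power_le_powr[OF \<rho> less_imp_le[OF \<delta>(1)] \<delta>(3)]
    by (auto simp: eventually_sequentially)
  define A where "A = (K + c\<^sup>2 / 2) * (8 / c + 128 / c\<^sup>2) * (8 / (pi * c))"
  define C where "C = A + 2 + 1 / (pi\<^sup>2 * c\<^sup>2)"
  have A: "A \<ge> 0"
    using K c by (simp add: A_def)
  show ?thesis
  proof (intro exI[of _ C] conjI allI impI exI[of _ "max 2 N"])
    show "C > 0"
      using A c by (simp add: C_def add_nonneg_pos)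
    fix n :: nat and l :: int
    assume "max 2 N \<le> n"
    then have n: "n \<ge> 2" "n \<ge> N"
      by auto
    have "1 / real n = n powr (-1)"
      using n by (simp add: powr_minus_divide)
    also have "\<dots> \<le> n powr (-\<delta>)"
      using n \<delta> by (intro powr_mono) auto
    finally have "1 / real n \<le> n powr (-\<delta>)" .
    then have "1 / (pi\<^sup>2 * c\<^sup>2) * (1 / n) \<le> 1 / (pi\<^sup>2 * c\<^sup>2) * n powr (-\<delta>)"
      by (rule mult_left_mono) simp
    then have "\<bar>n * prob {\<omega>\<in>space M. S n \<omega> = l} - 1 / pi * (c / (c\<^sup>2 + (of_int l / n)\<^sup>2))\<bar>
        \<le> A * n powr (-\<delta>) + 2 * n powr (-\<delta>) + 1 / (pi\<^sup>2 * c\<^sup>2) * n powr (-\<delta>)"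
      using local_limit_estimate[OF c K \<delta>(1,3) r(1-3) Kr near_r far exp_le_\<rho> n(1), of l] N[OF n(2)]
      unfolding A_def by linarith
    then show "\<bar>n * prob {\<omega>\<in>space M. S n \<omega> = l} - 1 / pi * (c / (c\<^sup>2 + (of_int l / n)\<^sup>2))\<bar>
        \<le> C * n powr (-\<delta>)"
      by (simp add: C_def algebra_simps)
  qed
qed

end

lemma bigo_at_0_imp_bound:
  fixes f g :: "real \<Rightarrow> 'a::real_normed_field"
  assumes "f \<in> O[at 0](g)"
  shows "\<exists>K>0. \<exists>r>0. \<forall>x. x \<noteq> 0 \<and> \<bar>x\<bar> < r \<longrightarrow> norm (f x) \<le> K * norm (g x)"
proof -
  obtain K where K: "K > 0" and "eventually (\<lambda>x. norm (f x) \<le> K * norm (g x)) (at 0)"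
    using landau_o.bigE[OF assms] by blast
  then obtain r where r: "r > 0" "\<And>x. x \<noteq> 0 \<Longrightarrow> dist x 0 < r \<Longrightarrow> norm (f x) \<le> K * norm (g x)"
    unfolding eventually_at by blast
  have "\<forall>x. x \<noteq> 0 \<and> \<bar>x\<bar> < r \<longrightarrow> norm (f x) \<le> K * norm (g x)"
    using r(2) by (simp add: dist_real_def)
  then show ?thesis
    using K r(1) by (intro exI[of _ K] exI[of _ r] conjI)
qed

theorem corollary4:
  fixes M :: "'a measure" and X :: "nat \<Rightarrow> 'a \<Rightarrow> int"
    and c_star \<epsilon> :: real
  assumes "prob_space M"
    and meas: "\<And>j. j \<ge> 1 \<Longrightarrow> X j \<in> measurable M (count_space UNIV)"
    and indep: "prob_space.indep_vars M (\<lambda>_. count_space UNIV) X {1..}"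
    and ident: "\<And>j. j \<ge> 1 \<Longrightarrow>
                  distr M (count_space UNIV) (X j) = distr M (count_space UNIV) (X 1)"
    and A1: "aperiodic_A1 M (X 1)"
    and c_pos: "c_star > 0" and eps_pos: "\<epsilon> > 0"
    and phi_exp: "(\<lambda>\<theta>. int_charfun M (X 1) \<theta> - (1 - complex_of_real (c_star * \<bar>\<theta>\<bar>)))
                    \<in> O[at 0](\<lambda>\<theta>. complex_of_real (\<bar>\<theta>\<bar> powr (1 + \<epsilon>)))"
  shows "\<exists>C2 > 0. \<exists>N2::nat. \<forall>n \<ge> N2. \<forall>l::int.
           \<bar>real n * measure M {\<omega>\<in>space M. (\<Sum>j\<in>{1..n}. X j \<omega>) = l}
              - (1 / pi) * (c_star / (c_star\<^sup>2 + (real_of_int l / real n)\<^sup>2))\<bar>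
           \<le> C2 * real n powr (- min (\<epsilon> / 2) (1 / 2))"
proof -
  interpret iid_int_sequence M X
    unfolding iid_int_sequence_def iid_int_sequence_axioms_def using assms(1) meas indep ident by blast
  have \<phi>_eq: "int_charfun M (X 1) = \<phi>"
    using int_charfun_eq_integral[OF assms(1) meas] by (auto simp: \<phi>_def)
  obtain K r0 where K: "K > 0" and r0: "r0 > 0" and near: "\<forall>\<theta>. \<theta> \<noteq> 0 \<and> \<bar>\<theta>\<bar> < r0 \<longrightarrow>
      norm (\<phi> \<theta> - (1 - of_real (c_star * \<bar>\<theta>\<bar>))) \<le> K * norm (complex_of_real (\<bar>\<theta>\<bar> powr (1 + \<epsilon>)))"
    using bigo_at_0_imp_bound[OF phi_exp] unfolding \<phi>_eq by blast
  have near': "norm (\<phi> \<theta> - (1 - of_real (c_star * \<bar>\<theta>\<bar>))) \<le> K * \<bar>\<theta>\<bar> powr (1 + \<epsilon>)"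
    if "\<theta> \<noteq> 0" "\<bar>\<theta>\<bar> < r0" for \<theta>
    using near that by simp
  have \<delta>: "0 < min (\<epsilon> / 2) (1 / 2)" "min (\<epsilon> / 2) (1 / 2) \<le> \<epsilon>" "min (\<epsilon> / 2) (1 / 2) \<le> 1"
    using eps_pos by auto
  show ?thesis
    using local_limit_theorem_rate[OF A1 c_pos less_imp_le[OF K] \<delta> r0 near'] unfolding S_def .
qed

end
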